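(* For every integer $k\ge2$, \[\mathsf P(k)=\bigoplus_{s=0}^{\lfloor k/2\rfloor}\underline x^s\,\mathsf I(k-2s)\,\underline x^s,\] where $\underline x^s\,\mathsf I(k-2s)\,\underline x^s=\{\underline x^sP(\underline x)\underline x^s:P\in\mathsf I(k-2s)\}$.
   Context: $\mathbb R_{0,m}$ is the $2^m$-dimensional real Clifford algebra generated by the orthonormal basis $e_1,\dots,e_m$ of $\mathbb R^m$ with relations $e_je_k+e_ke_j=-2\delta_{jk}$. A point of $\mathbb R^m$ is identified with $\underline x=\sum_jx_je_j$ (so $\underline x^s$ is its $s$-th Clifford power). The Dirac operator is $\partial_{\underline x}=\sum_je_j\partial_{x_j}$, and $\partial_{\underline x}f\partial_{\underline x}=\sum_{i,j}e_i(\partial_{x_i}\partial_{x_j}f)e_j$. $\mathsf P(k)$ is the real vector space of $\mathbb R_{0,m}$-valued homogeneous polynomials of degree $k$ on $\mathbb R^m$, and $\mathsf I(k)=\{P\in\mathsf P(k):\partial_{\underline x}P\partial_{\underline x}=0\}$ (inframonogenic homogeneous polynomials of degree $k$); note $\mathsf I(0)=\mathsf P(0)$ and $\mathsf I(1)=\mathsf P(1)$. *)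

theory Defs
  imports Complex_Main
begin

text \<open>Clifford algebra R_{0,m}: an element is a real coefficient function on blades
  (subsets A of {0..<m}, standing for e_A = e_{a1}...e_{ar}, a1<...<ar); coefficients of
  sets not contained in {0..<m} are zero. Basis vector e_{j+1} of the paper is blade {j}.\<close>

type_synonym cliff = "nat set \<Rightarrow> real"

definition clif :: "nat \<Rightarrow> cliff set" where
  "clif m = {a. \<forall>A. \<not> A \<subseteq> {..<m} \<longrightarrow> a A = 0}"

definition blade :: "nat set \<Rightarrow> cliff" where
  "blade A = (\<lambda>B. if B = A then 1 else 0)"

text \<open>e_A e_B = (-1)^(#{(a,b) in A x B. b < a} + |A \<inter> B|) e_(A symdiff B), since e_j^2 = -1.\<close>
definition csign :: "nat set \<Rightarrow> nat set \<Rightarrow> real" where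
  "csign A B = (-1) ^ (card {(a,b). a \<in> A \<and> b \<in> B \<and> b < a} + card (A \<inter> B))"

definition cmult :: "nat \<Rightarrow> cliff \<Rightarrow> cliff \<Rightarrow> cliff" where
  "cmult m a b = (\<lambda>C. \<Sum>A\<in>Pow {..<m}. \<Sum>B\<in>Pow {..<m}.
      if (A - B) \<union> (B - A) = C then csign A B * a A * b B else 0)"

text \<open>Clifford-valued polynomials in x_1..x_m (variables indexed 0..<m) represented by their
  coefficient function on exponent vectors alpha (x^alpha = prod x_i^(alpha i)).\<close>

type_synonym cpoly = "(nat \<Rightarrow> nat) \<Rightarrow> cliff"

definition mons :: "nat \<Rightarrow> nat \<Rightarrow> (nat \<Rightarrow> nat) set" where
  "mons m k = {\<alpha>. (\<forall>i. m \<le> i \<longrightarrow> \<alpha> i = 0) \<and> (\<Sum>i<m. \<alpha> i) = k}"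

definition hpoly :: "nat \<Rightarrow> nat \<Rightarrow> cpoly set" where
  "hpoly m k = {p. (\<forall>\<alpha>. \<alpha> \<notin> mons m k \<longrightarrow> p \<alpha> = (\<lambda>C. 0)) \<and> (\<forall>\<alpha>. p \<alpha> \<in> clif m)}"

definition unitv :: "nat \<Rightarrow> nat \<Rightarrow> nat" where
  "unitv j = (\<lambda>i. if i = j then 1 else 0)"

definition pderiv_x :: "nat \<Rightarrow> cpoly \<Rightarrow> cpoly" where
  "pderiv_x j p = (\<lambda>\<alpha> C. real (\<alpha> j + 1) * p (\<lambda>i. \<alpha> i + unitv j i) C)"

definition dirac2 :: "nat \<Rightarrow> cpoly \<Rightarrow> cpoly" where
  "dirac2 m p = (\<lambda>\<alpha> C. \<Sum>i<m. \<Sum>j<m.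
      cmult m (blade {i}) (cmult m (pderiv_x i (pderiv_x j p) \<alpha>) (blade {j})) C)"

definition infra :: "nat \<Rightarrow> nat \<Rightarrow> cpoly set" where
  "infra m k = {p \<in> hpoly m k. dirac2 m p = (\<lambda>\<alpha> C. 0)}"

definition pmult :: "nat \<Rightarrow> cpoly \<Rightarrow> cpoly \<Rightarrow> cpoly" where
  "pmult m p q = (\<lambda>\<gamma> C. \<Sum>\<alpha>\<in>{\<alpha>. \<forall>i. \<alpha> i \<le> \<gamma> i \<and> (m \<le> i \<longrightarrow> \<alpha> i = 0)}.
      cmult m (p \<alpha>) (q (\<lambda>i. \<gamma> i - \<alpha> i)) C)"

definition pone :: cpoly where
  "pone = (\<lambda>\<alpha> C. if (\<forall>i. \<alpha> i = 0) \<and> C = {} then 1 else 0)"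

definition xvec :: "nat \<Rightarrow> cpoly" where
  "xvec m = (\<lambda>\<alpha> C. \<Sum>j<m. if \<alpha> = unitv j then blade {j} C else 0)"

definition xpow :: "nat \<Rightarrow> nat \<Rightarrow> cpoly" where
  "xpow m s = (pmult m (xvec m) ^^ s) pone"

definition xIx :: "nat \<Rightarrow> nat \<Rightarrow> nat \<Rightarrow> cpoly set" where
  "xIx m k s = {pmult m (pmult m (xpow m s) P) (xpow m s) | P. P \<in> infra m (k - 2 * s)}"

end

theory Submission
  imports Defs "HOL-Library.Function_Algebras"
begin

(* The proof follows the classical Fischer-inner-product argument.
   (1) The Clifford product is associative, because the blade sign csign is a cocycle;
       the blade inner product makes left and right multiplication by a basis vector
       e_i anti-self-adjoint.  This gives associativity of the polynomial product, so
       x^(s+1) P x^(s+1) = x (x^s P x^s) x.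
   (2) With the Fischer inner product <P,Q> = sum_alpha alpha! <P_alpha, Q_alpha>, the
       sandwich T(R) = x R x is adjoint to the two-sided Dirac operator D(P) = d P d,
       i.e. <x R x, P> = <R, d P d>.  Since T is injective (for m > 0), the composite
       D o T is an injective, hence surjective, endomorphism of the finite-dimensional
       space P(n).
   (3) Surjectivity yields P = (P - T R) + T R with P - T R inframonogenic, and
       adjointness yields uniqueness of this splitting.
   (4) Induction on k assembles the full direct sum; the case m = 0 is trivial since
       then P(k) = 0 for k > 0. *)


section \<open>The Clifford product\<close>

text \<open>Sign contributed by moving e_b past e_a (including the square e_a e_a = -1).\<close>
definition pair_sign :: "nat \<Rightarrow> nat \<Rightarrow> real" where
  "pair_sign a b = (if b \<le> a then -1 else 1)"

lemma pair_sign_sq[simp]: "pair_sign a b * pair_sign a b = 1"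
  by (simp add: pair_sign_def)

text \<open>The blade sign factorises over pairs, which makes it multiplicative in each argument.\<close>
lemma csign_prod:
  assumes "finite A" "finite B"
  shows "csign A B = (\<Prod>a\<in>A. \<Prod>b\<in>B. pair_sign a b)"
proof -
  let ?S = "{(a,b). a \<in> A \<and> b \<in> B \<and> b < a}"
  let ?T = "(A \<times> B) \<inter> {p. snd p \<le> fst p}"
  have fS: "finite ?S" by (rule finite_subset[of _ "A \<times> B"]) (use assms in auto)
  have eq: "?T = ?S \<union> (\<lambda>a. (a,a)) ` (A \<inter> B)" by auto
  have "card ?T = card ?S + card ((\<lambda>a. (a,a)) ` (A \<inter> B))"
    unfolding eq by (rule card_Un_disjoint) (use fS assms in auto)
  also have "card ((\<lambda>a. (a,a)) ` (A \<inter> B)) = card (A \<inter> B)"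
    by (rule card_image) (auto simp: inj_on_def)
  finally have c: "card ?T = card ?S + card (A \<inter> B)" .
  have "(\<Prod>a\<in>A. \<Prod>b\<in>B. pair_sign a b) = (\<Prod>p\<in>A \<times> B. pair_sign (fst p) (snd p))"
    by (simp add: prod.cartesian_product case_prod_beta)
  also have "\<dots> = (\<Prod>p\<in>?T. -1) * (\<Prod>p\<in>(A \<times> B) \<inter> - {p. snd p \<le> fst p}. 1)"
    unfolding pair_sign_def using assms by (subst prod.If_cases) auto
  also have "\<dots> = (-1) ^ card ?T" by simp
  finally show ?thesis unfolding csign_def c by simp
qed

lemma prod_symdiff:
  fixes g :: "nat \<Rightarrow> real"
  assumes "finite A" "finite B" "\<And>x. g x * g x = 1"
  shows "prod g (sym_diff A B) = prod g A * prod g B"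
proof -
  have AB: "prod g A = prod g (A - B) * prod g (A \<inter> B)"
    using assms by (metis Diff_Diff_Int Diff_subset inf_le1 prod.subset_diff finite_Int mult.commute)
  have BA: "prod g B = prod g (B - A) * prod g (A \<inter> B)"
    using assms by (metis Diff_Diff_Int Diff_subset inf_le2 inf_commute prod.subset_diff mult.commute)
  have sq: "prod g (A \<inter> B) * prod g (A \<inter> B) = 1"
    by (simp add: assms(3) flip: prod.distrib)
  have "prod g (sym_diff A B) = prod g (A - B) * prod g (B - A)"
    using assms by (intro prod.union_disjoint) auto
  also have "\<dots> = prod g (A - B) * prod g (B - A) * (prod g (A \<inter> B) * prod g (A \<inter> B))"
    using sq by simp
  also have "\<dots> = prod g A * prod g B" unfolding AB BA by (simp add: algebra_simps)
  finally show ?thesis .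
qed

lemma csign_symdiff_left:
  assumes "finite A" "finite B" "finite C"
  shows "csign (sym_diff A B) C = csign A C * csign B C"
proof -
  have sq: "\<And>a. (\<Prod>c\<in>C. pair_sign a c) * (\<Prod>c\<in>C. pair_sign a c) = 1"
    by (simp flip: prod.distrib)
  show ?thesis using assms by (simp add: csign_prod prod_symdiff sq)
qed

lemma csign_symdiff_right:
  assumes "finite A" "finite B" "finite C"
  shows "csign A (sym_diff B C) = csign A B * csign A C"
  using assms by (simp add: csign_prod prod_symdiff prod.distrib)

text \<open>The 2-cocycle identity, the algebraic content of associativity.\<close>
lemma csign_cocycle:
  assumes "finite A" "finite B" "finite C"
  shows "csign A B * csign (sym_diff A B) C = csign A (sym_diff B C) * csign B C"
  using assms by (simp add: csign_symdiff_left csign_symdiff_right)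

lemma csign_single: "csign {i} {i} = -1"
proof -
  have e: "{(a, b). a \<in> {i} \<and> b \<in> {i} \<and> b < a} = {}" by auto
  show ?thesis unfolding csign_def by (simp only: e) simp
qed

lemma csign_nonzero: "csign A B \<noteq> 0"
  unfolding csign_def by simp

abbreviation blades :: "nat \<Rightarrow> nat set set" where "blades m \<equiv> Pow {..<m}"

lemma blades_finite: "A \<in> blades m \<Longrightarrow> finite A"
  by (meson PowD finite_lessThan finite_subset)

definition struct_const :: "nat set \<Rightarrow> nat set \<Rightarrow> nat set \<Rightarrow> real" where
  "struct_const A B C = (if sym_diff A B = C then csign A B else 0)"

lemma cmult_alt: "cmult m a b C = (\<Sum>A\<in>blades m. \<Sum>B\<in>blades m. struct_const A B C * a A * b B)"
  unfolding cmult_def struct_const_def by (intro sum.cong refl) auto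

lemma cmult_clif: "cmult m a b \<in> clif m"
  unfolding clif_def cmult_def by (auto intro!: sum.neutral)

lemma struct_const_sum:
  assumes "A \<in> blades m" "B \<in> blades m"
  shows "(\<Sum>E\<in>blades m. struct_const A B E * f E) = csign A B * f (sym_diff A B)"
proof -
  have "(\<Sum>E\<in>blades m. struct_const A B E * f E)
      = (\<Sum>E\<in>blades m. if sym_diff A B = E then csign A B * f E else 0)"
    unfolding struct_const_def by (intro sum.cong) auto
  also have "\<dots> = csign A B * f (sym_diff A B)"
    using assms by (subst sum.delta') auto
  finally show ?thesis .
qed

lemma sum_rotate3:
  "(\<Sum>x\<in>S. \<Sum>y\<in>T. \<Sum>z\<in>U. f x y z) = (\<Sum>y\<in>T. \<Sum>z\<in>U. \<Sum>x\<in>S. (f x y z :: real))"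
  by (subst sum.swap) (rule sum.cong[OF refl], rule sum.swap)

lemma sum_rotate4:
  "(\<Sum>x\<in>S. \<Sum>y\<in>T. \<Sum>z\<in>U. \<Sum>w\<in>V. f x y z w)
   = (\<Sum>y\<in>T. \<Sum>z\<in>U. \<Sum>w\<in>V. \<Sum>x\<in>S. (f x y z w :: real))"
  by (subst sum.swap) (rule sum.cong[OF refl], rule sum_rotate3)

text \<open>Both bracketings of a triple product expand into the same triple sum over blades,
  with coefficients that agree by the cocycle identity.\<close>
lemma cmult_assoc_left_expand:
  "cmult m (cmult m a b) c D = (\<Sum>A\<in>blades m. \<Sum>B\<in>blades m. \<Sum>C\<in>blades m.
      csign A B * struct_const (sym_diff A B) C D * a A * b B * c C)"
proof -
  have "cmult m (cmult m a b) c D = (\<Sum>E\<in>blades m. \<Sum>C\<in>blades m. \<Sum>A\<in>blades m. \<Sum>B\<in>blades m.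
      struct_const A B E * (struct_const E C D * a A * b B * c C))"
    unfolding cmult_alt by (simp add: sum_distrib_left sum_distrib_right algebra_simps)
  also have "\<dots> = (\<Sum>A\<in>blades m. \<Sum>B\<in>blades m. \<Sum>C\<in>blades m. \<Sum>E\<in>blades m.
      struct_const A B E * (struct_const E C D * a A * b B * c C))"
    by (subst sum_rotate4) (rule sum_rotate3)
  also have "\<dots> = (\<Sum>A\<in>blades m. \<Sum>B\<in>blades m. \<Sum>C\<in>blades m.
      csign A B * struct_const (sym_diff A B) C D * a A * b B * c C)"
    by (intro sum.cong refl) (subst struct_const_sum; simp add: algebra_simps)
  finally show ?thesis .
qed

lemma cmult_assoc_right_expand:
  "cmult m a (cmult m b c) D = (\<Sum>A\<in>blades m. \<Sum>B\<in>blades m. \<Sum>C\<in>blades m.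
      csign B C * struct_const A (sym_diff B C) D * a A * b B * c C)"
proof -
  have "cmult m a (cmult m b c) D = (\<Sum>A\<in>blades m. \<Sum>E\<in>blades m. \<Sum>B\<in>blades m. \<Sum>C\<in>blades m.
      struct_const B C E * (struct_const A E D * a A * b B * c C))"
    unfolding cmult_alt by (simp add: sum_distrib_left sum_distrib_right algebra_simps)
  also have "\<dots> = (\<Sum>A\<in>blades m. \<Sum>B\<in>blades m. \<Sum>C\<in>blades m. \<Sum>E\<in>blades m.
      struct_const B C E * (struct_const A E D * a A * b B * c C))"
    by (rule sum.cong[OF refl], rule sum_rotate3)
  also have "\<dots> = (\<Sum>A\<in>blades m. \<Sum>B\<in>blades m. \<Sum>C\<in>blades m.
      csign B C * struct_const A (sym_diff B C) D * a A * b B * c C)"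
    by (intro sum.cong refl) (subst struct_const_sum; simp add: algebra_simps)
  finally show ?thesis .
qed

lemma cmult_assoc: "cmult m (cmult m a b) c = cmult m a (cmult m b c)"
proof
  fix D
  have "csign A B * struct_const (sym_diff A B) C D = csign B C * struct_const A (sym_diff B C) D"
    if "A \<in> blades m" "B \<in> blades m" "C \<in> blades m" for A B C
  proof -
    have "sym_diff (sym_diff A B) C = sym_diff A (sym_diff B C)" by blast
    then show ?thesis
      unfolding struct_const_def using csign_cocycle[of A B C] that blades_finite
      by (simp add: mult.commute)
  qed
  then show "cmult m (cmult m a b) c D = cmult m a (cmult m b c) D"
    unfolding cmult_assoc_left_expand cmult_assoc_right_expand by (intro sum.cong refl) simp
qed

lemma cmult_sum_left:
  "finite I \<Longrightarrow> cmult m (\<lambda>C. \<Sum>i\<in>I. f i C) b D = (\<Sum>i\<in>I. cmult m (f i) b D)"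
  unfolding cmult_alt by (simp add: sum_distrib_left sum_distrib_right algebra_simps sum.swap[of _ I])

lemma cmult_sum_right:
  "finite I \<Longrightarrow> cmult m a (\<lambda>C. \<Sum>i\<in>I. f i C) D = (\<Sum>i\<in>I. cmult m a (f i) D)"
  unfolding cmult_alt by (simp add: sum_distrib_left sum_distrib_right algebra_simps sum.swap[of _ I])

lemma cmult_add_left: "cmult m (\<lambda>C. a C + a' C) b = (\<lambda>D. cmult m a b D + cmult m a' b D)"
  unfolding cmult_alt by (simp add: sum.distrib algebra_simps)

lemma cmult_add_right: "cmult m a (\<lambda>C. b C + b' C) = (\<lambda>D. cmult m a b D + cmult m a b' D)"
  unfolding cmult_alt by (simp add: sum.distrib algebra_simps)

lemma cmult_scale_left: "cmult m (\<lambda>C. r * a C) b = (\<lambda>D. r * cmult m a b D)"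
  unfolding cmult_alt by (simp add: sum_distrib_left algebra_simps)

lemma cmult_scale_right: "cmult m a (\<lambda>C. r * b C) = (\<lambda>D. r * cmult m a b D)"
  unfolding cmult_alt by (simp add: sum_distrib_left algebra_simps)

lemma cmult_zero_left[simp]: "cmult m (\<lambda>C. 0) b = (\<lambda>D. 0)"
  unfolding cmult_alt by simp

lemma cmult_zero_right[simp]: "cmult m a (\<lambda>C. 0) = (\<lambda>D. 0)"
  unfolding cmult_alt by simp

lemma cmult_if_left: "cmult m (\<lambda>C. if P then a C else 0) b D = (if P then cmult m a b D else 0)"
  by (cases P) simp_all

lemma cmult_if_right: "cmult m a (\<lambda>C. if P then b C else 0) D = (if P then cmult m a b D else 0)"
  by (cases P) simp_all

lemma blades_symdiff_left: "i < m \<Longrightarrow> sym_diff {i} C \<in> blades m \<longleftrightarrow> C \<in> blades m"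
  by auto

lemma blades_symdiff_right: "i < m \<Longrightarrow> sym_diff C {i} \<in> blades m \<longleftrightarrow> C \<in> blades m"
  by auto

lemma symdiff_single_invol[simp]:
  "sym_diff {i} (sym_diff {i} D) = D" "sym_diff (sym_diff D {i}) {i} = D"
  "sym_diff (sym_diff {i} D) {i} = D" "sym_diff {i} (sym_diff D {i}) = D"
  by auto

lemma cmult_blade_left:
  assumes "i < m"
  shows "cmult m (blade {i}) a C
    = (if C \<in> blades m then csign {i} (sym_diff {i} C) * a (sym_diff {i} C) else 0)"
proof -
  have "cmult m (blade {i}) a C
      = (\<Sum>A\<in>blades m. if A = {i} then (\<Sum>B\<in>blades m. struct_const A B C * a B) else 0)"
    unfolding cmult_alt blade_def by (intro sum.cong refl) (auto simp: sum_distrib_left)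
  also have "\<dots> = (\<Sum>B\<in>blades m. struct_const {i} B C * a B)"
    using assms by (subst sum.delta) auto
  also have "\<dots> = (\<Sum>B\<in>blades m. if B = sym_diff {i} C then csign {i} B * a B else 0)"
    unfolding struct_const_def by (intro sum.cong refl) auto
  also have "\<dots> = (if C \<in> blades m then csign {i} (sym_diff {i} C) * a (sym_diff {i} C) else 0)"
    using blades_symdiff_left[OF assms, of C] by (subst sum.delta) auto
  finally show ?thesis .
qed

lemma cmult_blade_right:
  assumes "j < m"
  shows "cmult m a (blade {j}) C
    = (if C \<in> blades m then csign (sym_diff C {j}) {j} * a (sym_diff C {j}) else 0)"
proof -
  have "cmult m a (blade {j}) C
      = (\<Sum>A\<in>blades m. \<Sum>B\<in>blades m. if B = {j} then struct_const A B C * a A else 0)"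
    unfolding cmult_alt blade_def by (intro sum.cong refl) auto
  also have "\<dots> = (\<Sum>A\<in>blades m. struct_const A {j} C * a A)"
    using assms by (intro sum.cong refl) (subst sum.delta, auto)
  also have "\<dots> = (\<Sum>A\<in>blades m. if A = sym_diff C {j} then csign A {j} * a A else 0)"
    unfolding struct_const_def by (intro sum.cong refl) auto
  also have "\<dots> = (if C \<in> blades m then csign (sym_diff C {j}) {j} * a (sym_diff C {j}) else 0)"
    using blades_symdiff_right[OF assms, of C] by (subst sum.delta) auto
  finally show ?thesis .
qed

lemma cmult_one_left: "cmult m (blade {}) b C = (if C \<in> blades m then b C else 0)"
proof -
  have "cmult m (blade {}) b C
      = (\<Sum>A\<in>blades m. if A = {} then (\<Sum>B\<in>blades m. struct_const A B C * b B) else 0)"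
    unfolding cmult_alt blade_def by (intro sum.cong refl) (auto simp: sum_distrib_left)
  also have "\<dots> = (\<Sum>B\<in>blades m. struct_const {} B C * b B)" by (subst sum.delta) auto
  also have "\<dots> = (\<Sum>B\<in>blades m. if B = C then b B else 0)"
    unfolding struct_const_def csign_def by (intro sum.cong refl) auto
  also have "\<dots> = (if C \<in> blades m then b C else 0)" by (subst sum.delta) auto
  finally show ?thesis .
qed

lemma cmult_one_right: "cmult m a (blade {}) C = (if C \<in> blades m then a C else 0)"
proof -
  have "cmult m a (blade {}) C
      = (\<Sum>A\<in>blades m. \<Sum>B\<in>blades m. if B = {} then struct_const A B C * a A else 0)"
    unfolding cmult_alt blade_def by (intro sum.cong refl) auto
  also have "\<dots> = (\<Sum>A\<in>blades m. if A = C then a A else 0)"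
    unfolding struct_const_def csign_def by (intro sum.cong refl) (subst sum.delta, auto)
  also have "\<dots> = (if C \<in> blades m then a C else 0)" by (subst sum.delta) auto
  finally show ?thesis .
qed

lemma blade_sandwich_zero:
  assumes "i < m" "a \<in> clif m" "cmult m (blade {i}) (cmult m a (blade {i})) = (\<lambda>C. 0)"
  shows "a = (\<lambda>C. 0)"
proof
  fix C
  show "a C = 0"
  proof (cases "C \<in> blades m")
    case True
    have "0 = cmult m (blade {i}) (cmult m a (blade {i})) C" using assms(3) by simp
    also have "\<dots> = (csign {i} (sym_diff {i} C) * csign C {i}) * a C"
      using True assms(1) by (auto simp add: cmult_blade_left cmult_blade_right)
    finally show ?thesis by (simp add: csign_nonzero)
  next
    case False then show ?thesis using assms(2) unfolding clif_def by auto
  qed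
qed

definition cinner :: "nat \<Rightarrow> cliff \<Rightarrow> cliff \<Rightarrow> real" where
  "cinner m a b = (\<Sum>C\<in>blades m. a C * b C)"

lemma cinner_nonneg: "0 \<le> cinner m a a"
  unfolding cinner_def by (rule sum_nonneg) simp

lemma cinner_sum_left: "finite S \<Longrightarrow> cinner m (\<lambda>C. \<Sum>s\<in>S. f s C) b = (\<Sum>s\<in>S. cinner m (f s) b)"
  unfolding cinner_def by (simp add: sum_distrib_right sum.swap[of _ S])

lemma cinner_sum_right: "finite S \<Longrightarrow> cinner m a (\<lambda>C. \<Sum>s\<in>S. f s C) = (\<Sum>s\<in>S. cinner m a (f s))"
  unfolding cinner_def by (simp add: sum_distrib_left sum.swap[of _ S])

lemma cinner_if_left: "cinner m (\<lambda>C. if P then a C else 0) b = (if P then cinner m a b else 0)"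
  unfolding cinner_def by simp

lemma cinner_scale_right: "cinner m a (\<lambda>C. c * b C) = c * cinner m a b"
  unfolding cinner_def by (simp add: sum_distrib_left algebra_simps)

lemma csign_flip_left: "finite D \<Longrightarrow> csign {i} (sym_diff {i} D) = - csign {i} D"
  using csign_symdiff_right[of "{i}" "{i}" D] by (simp add: csign_single)

lemma csign_flip_right: "finite D \<Longrightarrow> csign (sym_diff D {j}) {j} = - csign D {j}"
  using csign_symdiff_left[of D "{j}" "{j}"] by (simp add: csign_single)

lemma cinner_blade_left:
  assumes "i < m"
  shows "cinner m (cmult m (blade {i}) a) b = - cinner m a (cmult m (blade {i}) b)"
proof -
  have "cinner m (cmult m (blade {i}) a) b
      = (\<Sum>C\<in>blades m. csign {i} (sym_diff {i} C) * a (sym_diff {i} C) * b C)"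
    unfolding cinner_def cmult_blade_left[OF assms] by (intro sum.cong refl) auto
  also have "\<dots> = (\<Sum>D\<in>blades m. csign {i} D * a D * b (sym_diff {i} D))"
    by (rule sum.reindex_bij_witness[where i="\<lambda>D. sym_diff {i} D" and j="\<lambda>D. sym_diff {i} D"])
       (use assms in auto)
  also have "\<dots> = - cinner m a (cmult m (blade {i}) b)"
    unfolding cinner_def cmult_blade_left[OF assms]
    by (auto simp: sum_negf[symmetric] blades_symdiff_left[OF assms] csign_flip_left blades_finite
        intro!: sum.cong)
  finally show ?thesis .
qed

lemma cinner_blade_right:
  assumes "j < m"
  shows "cinner m (cmult m a (blade {j})) b = - cinner m a (cmult m b (blade {j}))"
proof -
  have "cinner m (cmult m a (blade {j})) b
      = (\<Sum>C\<in>blades m. csign (sym_diff C {j}) {j} * a (sym_diff C {j}) * b C)"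
    unfolding cinner_def cmult_blade_right[OF assms] by (intro sum.cong refl) auto
  also have "\<dots> = (\<Sum>D\<in>blades m. csign D {j} * a D * b (sym_diff D {j}))"
    by (rule sum.reindex_bij_witness[where i="\<lambda>D. sym_diff D {j}" and j="\<lambda>D. sym_diff D {j}"])
       (use assms in auto)
  also have "\<dots> = - cinner m a (cmult m b (blade {j}))"
    unfolding cinner_def cmult_blade_right[OF assms]
    by (auto simp: sum_negf[symmetric] blades_symdiff_right[OF assms] csign_flip_right blades_finite
        intro!: sum.cong)
  finally show ?thesis .
qed

lemma cinner_sandwich:
  assumes "i < m" "j < m"
  shows "cinner m (cmult m (cmult m (blade {i}) a) (blade {j})) b
    = cinner m a (cmult m (blade {i}) (cmult m b (blade {j})))"
  using cinner_blade_right[OF assms(2)] cinner_blade_left[OF assms(1)] by simp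

section \<open>The polynomial product\<close>

definition subexps :: "nat \<Rightarrow> (nat \<Rightarrow> nat) \<Rightarrow> (nat \<Rightarrow> nat) set" where
  "subexps m \<gamma> = {\<alpha>. \<forall>i. \<alpha> i \<le> \<gamma> i \<and> (m \<le> i \<longrightarrow> \<alpha> i = 0)}"

lemma pmult_subexps:
  "pmult m p q \<gamma> = (\<lambda>C. \<Sum>\<alpha>\<in>subexps m \<gamma>. cmult m (p \<alpha>) (q (\<lambda>i. \<gamma> i - \<alpha> i)) C)"
  unfolding pmult_def subexps_def by simp

lemma finite_bounded_funs: "finite {\<alpha>::nat\<Rightarrow>nat. \<forall>i. \<alpha> i \<le> M \<and> (m \<le> i \<longrightarrow> \<alpha> i = 0)}"
proof -
  have "{\<alpha>::nat\<Rightarrow>nat. \<forall>i. \<alpha> i \<le> M \<and> (m \<le> i \<longrightarrow> \<alpha> i = 0)} \<subseteq>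
        {f. \<forall>x. (x \<in> {..<m} \<longrightarrow> f x \<in> {..M}) \<and> (x \<notin> {..<m} \<longrightarrow> f x = 0)}" by auto
  then show ?thesis by (rule finite_subset) (rule finite_set_of_finite_funs, auto)
qed

lemma finite_subexps[simp]: "finite (subexps m \<gamma>)"
proof -
  have "\<alpha> i \<le> (\<Sum>j<m. \<gamma> j)" if "\<alpha> \<in> subexps m \<gamma>" for \<alpha> i
  proof (cases "i < m")
    case True
    then have "\<gamma> i \<le> (\<Sum>j<m. \<gamma> j)" by (intro member_le_sum) auto
    moreover have "\<alpha> i \<le> \<gamma> i" using that unfolding subexps_def by auto
    ultimately show ?thesis by linarith
  next
    case False then show ?thesis using that unfolding subexps_def by auto
  qed
  then have "subexps m \<gamma> \<subseteq> {\<alpha>. \<forall>i. \<alpha> i \<le> (\<Sum>j<m. \<gamma> j) \<and> (m \<le> i \<longrightarrow> \<alpha> i = 0)}"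
    unfolding subexps_def by auto
  then show ?thesis by (rule finite_subset) (rule finite_bounded_funs)
qed

lemma finite_mons[simp]: "finite (mons m k)"
proof -
  have "\<alpha> i \<le> k" if "\<alpha> \<in> mons m k" for \<alpha> i
  proof (cases "i < m")
    case True
    then have "\<alpha> i \<le> (\<Sum>j<m. \<alpha> j)" by (intro member_le_sum) auto
    then show ?thesis using that unfolding mons_def by auto
  next
    case False then show ?thesis using that unfolding mons_def by auto
  qed
  then have "mons m k \<subseteq> {\<alpha>. \<forall>i. \<alpha> i \<le> k \<and> (m \<le> i \<longrightarrow> \<alpha> i = 0)}"
    unfolding mons_def by auto
  then show ?thesis by (rule finite_subset) (rule finite_bounded_funs)
qed

lemma mons_add:
  assumes "\<alpha> \<in> subexps m \<gamma>" "\<alpha> \<in> mons m a" "(\<lambda>i. \<gamma> i - \<alpha> i) \<in> mons m b"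
  shows "\<gamma> \<in> mons m (a + b)"
proof -
  have le: "\<alpha> i \<le> \<gamma> i" for i using assms(1) unfolding subexps_def by auto
  have "(\<Sum>i<m. \<gamma> i) = (\<Sum>i<m. \<alpha> i) + (\<Sum>i<m. \<gamma> i - \<alpha> i)"
    using le by (simp flip: sum.distrib)
  moreover have "\<gamma> i = 0" if "m \<le> i" for i
  proof -
    have "\<alpha> i = 0" "\<gamma> i - \<alpha> i = 0" using assms(2,3) that unfolding mons_def by auto
    then show ?thesis by simp
  qed
  ultimately show ?thesis using assms(2,3) unfolding mons_def by auto
qed

definition supported :: "nat \<Rightarrow> cpoly \<Rightarrow> bool" where
  "supported m p \<longleftrightarrow> (\<forall>\<alpha>. \<not> (\<forall>i. m \<le> i \<longrightarrow> \<alpha> i = 0) \<longrightarrow> p \<alpha> = (\<lambda>C. 0)) \<and> (\<forall>\<alpha>. p \<alpha> \<in> clif m)"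

lemma hpoly_supported: "p \<in> hpoly m k \<Longrightarrow> supported m p"
  unfolding hpoly_def supported_def mons_def by auto

lemma clif_sum: "finite I \<Longrightarrow> (\<And>i. i \<in> I \<Longrightarrow> f i \<in> clif m) \<Longrightarrow> (\<lambda>C. \<Sum>i\<in>I. f i C) \<in> clif m"
  unfolding clif_def by (auto intro!: sum.neutral)

lemma pmult_clif: "pmult m p q \<gamma> \<in> clif m"
  unfolding pmult_subexps by (rule clif_sum) (auto intro: cmult_clif)

lemma pmult_hpoly:
  assumes p: "p \<in> hpoly m a" and q: "q \<in> hpoly m b"
  shows "pmult m p q \<in> hpoly m (a + b)"
  unfolding hpoly_def
proof (intro CollectI conjI allI impI)
  fix \<gamma> show "pmult m p q \<gamma> \<in> clif m" by (rule pmult_clif)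
next
  fix \<gamma> assume g: "\<gamma> \<notin> mons m (a + b)"
  have "cmult m (p \<alpha>) (q (\<lambda>i. \<gamma> i - \<alpha> i)) = (\<lambda>C. 0)" if "\<alpha> \<in> subexps m \<gamma>" for \<alpha>
  proof -
    have "p \<alpha> = (\<lambda>C. 0) \<or> q (\<lambda>i. \<gamma> i - \<alpha> i) = (\<lambda>C. 0)"
      using mons_add[OF that] g p q unfolding hpoly_def by blast
    then show ?thesis by auto
  qed
  then show "pmult m p q \<gamma> = (\<lambda>C. 0)"
    unfolding pmult_subexps by simp
qed

lemma pmult_supported: "supported m q \<Longrightarrow> supported m (pmult m p q)"
  unfolding supported_def
proof (intro conjI allI impI)
  fix \<gamma> :: "nat \<Rightarrow> nat"
  assume q: "(\<forall>\<alpha>. \<not> (\<forall>i. m \<le> i \<longrightarrow> \<alpha> i = 0) \<longrightarrow> q \<alpha> = (\<lambda>C. 0)) \<and> (\<forall>\<alpha>. q \<alpha> \<in> clif m)"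
    and g: "\<not> (\<forall>i. m \<le> i \<longrightarrow> \<gamma> i = 0)"
  have "q (\<lambda>l. \<gamma> l - \<alpha> l) = (\<lambda>C. 0)" if "\<alpha> \<in> subexps m \<gamma>" for \<alpha>
  proof -
    from g obtain i where i: "m \<le> i" "\<gamma> i \<noteq> 0" by auto
    with that have "\<alpha> i = 0" unfolding subexps_def by auto
    with i have "\<not> (\<forall>l. m \<le> l \<longrightarrow> \<gamma> l - \<alpha> l = 0)" by auto
    then show ?thesis using q[THEN conjunct1, rule_format, of "\<lambda>l. \<gamma> l - \<alpha> l"] by blast
  qed
  then show "pmult m p q \<gamma> = (\<lambda>C. 0)" unfolding pmult_subexps by simp
qed (rule pmult_clif)

text \<open>Reindexing the double sum over alpha >= beta, i.e. splitting gamma = beta + delta + rest.\<close>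
lemma sum_subexps_reassoc:
  "(\<Sum>(\<alpha>,\<beta>)\<in>Sigma (subexps m \<gamma>) (subexps m). g \<beta> (\<lambda>i. \<alpha> i - \<beta> i) (\<lambda>i. \<gamma> i - \<alpha> i))
   = (\<Sum>(\<beta>,\<delta>)\<in>Sigma (subexps m \<gamma>) (\<lambda>\<beta>. subexps m (\<lambda>i. \<gamma> i - \<beta> i)).
        g \<beta> \<delta> (\<lambda>i. (\<gamma> i - \<beta> i) - \<delta> i))"
proof (rule sum.reindex_bij_witness[where i="\<lambda>(\<beta>,\<delta>). (\<lambda>i. \<beta> i + \<delta> i, \<beta>)"
      and j="\<lambda>(\<alpha>,\<beta>). (\<beta>, \<lambda>i. \<alpha> i - \<beta> i)"])
  fix a assume "a \<in> Sigma (subexps m \<gamma>) (subexps m)"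
  then show "(case case a of (\<alpha>, \<beta>) \<Rightarrow> (\<beta>, \<lambda>i. \<alpha> i - \<beta> i) of (\<beta>, \<delta>) \<Rightarrow> (\<lambda>i. \<beta> i + \<delta> i, \<beta>)) = a"
    and "(case a of (\<alpha>, \<beta>) \<Rightarrow> (\<beta>, \<lambda>i. \<alpha> i - \<beta> i))
          \<in> Sigma (subexps m \<gamma>) (\<lambda>\<beta>. subexps m (\<lambda>i. \<gamma> i - \<beta> i))"
    unfolding subexps_def by (auto simp: fun_eq_iff le_diff_conv2 intro: order_trans diff_le_mono)
next
  fix b assume b: "b \<in> Sigma (subexps m \<gamma>) (\<lambda>\<beta>. subexps m (\<lambda>i. \<gamma> i - \<beta> i))"
  then show "(case case b of (\<beta>, \<delta>) \<Rightarrow> (\<lambda>i. \<beta> i + \<delta> i, \<beta>) of (\<alpha>, \<beta>) \<Rightarrow> (\<beta>, \<lambda>i. \<alpha> i - \<beta> i)) = b"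
    by (auto simp: fun_eq_iff)
  from b show "(case b of (\<beta>, \<delta>) \<Rightarrow> (\<lambda>i. \<beta> i + \<delta> i, \<beta>)) \<in> Sigma (subexps m \<gamma>) (subexps m)"
    unfolding subexps_def by (auto simp: le_diff_conv2 add.commute)
qed (auto simp: diff_diff_add subexps_def)

lemma pmult_assoc: "pmult m (pmult m p q) r = pmult m p (pmult m q r)"
proof (intro ext)
  fix \<gamma> C
  have "pmult m (pmult m p q) r \<gamma> C = (\<Sum>(\<alpha>,\<beta>)\<in>Sigma (subexps m \<gamma>) (subexps m).
      cmult m (p \<beta>) (cmult m (q (\<lambda>i. \<alpha> i - \<beta> i)) (r (\<lambda>i. \<gamma> i - \<alpha> i))) C)"
    unfolding pmult_subexps by (simp add: cmult_sum_left cmult_assoc sum.Sigma)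
  also have "\<dots> = (\<Sum>(\<beta>,\<delta>)\<in>Sigma (subexps m \<gamma>) (\<lambda>\<beta>. subexps m (\<lambda>i. \<gamma> i - \<beta> i)).
      cmult m (p \<beta>) (cmult m (q \<delta>) (r (\<lambda>i. (\<gamma> i - \<beta> i) - \<delta> i))) C)"
    by (rule sum_subexps_reassoc)
  also have "\<dots> = pmult m p (pmult m q r) \<gamma> C"
    unfolding pmult_subexps by (simp add: cmult_sum_right sum.Sigma)
  finally show "pmult m (pmult m p q) r \<gamma> C = pmult m p (pmult m q r) \<gamma> C" .
qed

lemma pmult_sum_left:
  "finite S \<Longrightarrow> pmult m (\<lambda>\<alpha> C. \<Sum>s\<in>S. Q s \<alpha> C) r = (\<lambda>\<gamma> C. \<Sum>s\<in>S. pmult m (Q s) r \<gamma> C)"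
  unfolding pmult_subexps by (simp add: cmult_sum_left sum.swap[of _ S])

lemma pmult_sum_right:
  "finite S \<Longrightarrow> pmult m r (\<lambda>\<alpha> C. \<Sum>s\<in>S. Q s \<alpha> C) = (\<lambda>\<gamma> C. \<Sum>s\<in>S. pmult m r (Q s) \<gamma> C)"
  unfolding pmult_subexps by (simp add: cmult_sum_right sum.swap[of _ S])

lemma pmult_add_left:
  "pmult m (\<lambda>\<alpha> C. p \<alpha> C + p' \<alpha> C) r = (\<lambda>\<gamma> C. pmult m p r \<gamma> C + pmult m p' r \<gamma> C)"
  unfolding pmult_subexps by (simp add: cmult_add_left sum.distrib)

lemma pmult_add_right:
  "pmult m r (\<lambda>\<alpha> C. p \<alpha> C + p' \<alpha> C) = (\<lambda>\<gamma> C. pmult m r p \<gamma> C + pmult m r p' \<gamma> C)"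
  unfolding pmult_subexps by (simp add: cmult_add_right sum.distrib)

lemma pmult_scale_left: "pmult m (\<lambda>\<alpha> C. c * p \<alpha> C) r = (\<lambda>\<gamma> C. c * pmult m p r \<gamma> C)"
  unfolding pmult_subexps by (simp add: cmult_scale_left sum_distrib_left)

lemma pmult_scale_right: "pmult m r (\<lambda>\<alpha> C. c * p \<alpha> C) = (\<lambda>\<gamma> C. c * pmult m r p \<gamma> C)"
  unfolding pmult_subexps by (simp add: cmult_scale_right sum_distrib_left)

lemma pmult_zero_left[simp]: "pmult m (\<lambda>\<alpha> C. 0) r = (\<lambda>\<gamma> C. 0)"
  unfolding pmult_subexps by simp

lemma pmult_zero_right[simp]: "pmult m r (\<lambda>\<alpha> C. 0) = (\<lambda>\<gamma> C. 0)"
  unfolding pmult_subexps by simp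

lemma pone_eq: "pone \<alpha> = (if \<alpha> = (\<lambda>i. 0) then blade {} else (\<lambda>C. 0))"
  unfolding pone_def blade_def by (auto simp: fun_eq_iff)

lemma pmult_pone_left: "supported m p \<Longrightarrow> pmult m pone p = p"
proof (intro ext)
  fix \<gamma> C assume p: "supported m p"
  have "pmult m pone p \<gamma> C
      = (\<Sum>\<alpha>\<in>subexps m \<gamma>. if \<alpha> = (\<lambda>i. 0) then cmult m (blade {}) (p (\<lambda>i. \<gamma> i - \<alpha> i)) C else 0)"
    unfolding pmult_subexps pone_eq by (intro sum.cong refl) auto
  also have "\<dots> = cmult m (blade {}) (p \<gamma>) C"
    by (subst sum.delta[OF finite_subexps]) (simp add: subexps_def)
  also have "\<dots> = p \<gamma> C" using p unfolding supported_def clif_def by (auto simp add: cmult_one_left)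
  finally show "pmult m pone p \<gamma> C = p \<gamma> C" .
qed

lemma pmult_pone_right: "supported m p \<Longrightarrow> pmult m p pone = p"
proof (intro ext)
  fix \<gamma> C assume p: "supported m p"
  have "pmult m p pone \<gamma> C = (\<Sum>\<alpha>\<in>subexps m \<gamma>. if \<alpha> = \<gamma> then cmult m (p \<alpha>) (blade {}) C else 0)"
    unfolding pmult_subexps pone_eq
    by (intro sum.cong refl) (auto simp: fun_eq_iff subexps_def le_antisym)
  also have "\<dots> = (if \<gamma> \<in> subexps m \<gamma> then cmult m (p \<gamma>) (blade {}) C else 0)"
    by (subst sum.delta) auto
  also have "\<dots> = p \<gamma> C"
    using p unfolding supported_def clif_def subexps_def by (auto simp add: cmult_one_right)
  finally show "pmult m p pone \<gamma> C = p \<gamma> C" .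
qed

lemma unitv_mons: "j < m \<Longrightarrow> unitv j \<in> mons m 1"
  unfolding mons_def unitv_def by auto

lemma xvec_hpoly: "xvec m \<in> hpoly m 1"
  unfolding hpoly_def
proof (intro CollectI conjI allI impI)
  fix \<alpha> assume "\<alpha> \<notin> mons m 1"
  then have "\<And>j. j < m \<Longrightarrow> \<alpha> \<noteq> unitv j" using unitv_mons by blast
  then show "xvec m \<alpha> = (\<lambda>C. 0)" unfolding xvec_def by auto
next
  fix \<alpha> show "xvec m \<alpha> \<in> clif m"
    unfolding xvec_def by (rule clif_sum) (auto simp: clif_def blade_def)
qed

lemma pone_hpoly: "pone \<in> hpoly m 0"
  unfolding hpoly_def mons_def pone_eq by (auto simp: blade_def clif_def)

lemma xpow_0: "xpow m 0 = pone"
  unfolding xpow_def by simp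

lemma xpow_Suc: "xpow m (Suc s) = pmult m (xvec m) (xpow m s)"
  unfolding xpow_def by simp

lemma xpow_hpoly: "xpow m s \<in> hpoly m s"
  by (induction s) (auto simp: xpow_0 xpow_Suc pone_hpoly dest: pmult_hpoly[OF xvec_hpoly])

lemma xpow_comm: "pmult m (xvec m) (xpow m s) = pmult m (xpow m s) (xvec m)"
proof (induction s)
  case 0
  show ?case using hpoly_supported[OF xvec_hpoly]
    by (simp add: xpow_0 pmult_pone_left pmult_pone_right)
next
  case (Suc s)
  have "pmult m (xpow m (Suc s)) (xvec m) = pmult m (xvec m) (pmult m (xpow m s) (xvec m))"
    by (simp add: xpow_Suc pmult_assoc)
  also have "\<dots> = pmult m (xvec m) (xpow m (Suc s))" by (simp add: xpow_Suc Suc)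
  finally show ?case by simp
qed

definition xsand :: "nat \<Rightarrow> cpoly \<Rightarrow> cpoly" where
  "xsand m R = pmult m (pmult m (xvec m) R) (xvec m)"

lemma sandwich_Suc:
  "pmult m (pmult m (xpow m (Suc s)) P) (xpow m (Suc s))
   = xsand m (pmult m (pmult m (xpow m s) P) (xpow m s))"
proof -
  have "pmult m (pmult m (xpow m (Suc s)) P) (xpow m (Suc s)) =
      pmult m (pmult m (pmult m (xvec m) (xpow m s)) P) (pmult m (xpow m s) (xvec m))"
    by (simp add: xpow_Suc xpow_comm)
  then show ?thesis by (simp add: pmult_assoc xsand_def)
qed

section \<open>The x-sandwich and the Dirac operator in coordinates\<close>

definition dec_exp :: "(nat \<Rightarrow> nat) \<Rightarrow> nat \<Rightarrow> nat \<Rightarrow> nat" where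
  "dec_exp \<gamma> j = (\<lambda>l. \<gamma> l - unitv j l)"

definition inc_exp :: "(nat \<Rightarrow> nat) \<Rightarrow> nat \<Rightarrow> nat \<Rightarrow> nat" where
  "inc_exp \<gamma> j = (\<lambda>l. \<gamma> l + unitv j l)"

lemma cmult_xvec_left:
  "cmult m (xvec m \<alpha>) b D = (\<Sum>i<m. if \<alpha> = unitv i then cmult m (blade {i}) b D else 0)"
  unfolding xvec_def by (simp add: cmult_sum_left cmult_if_left)

lemma cmult_xvec_right:
  "cmult m a (xvec m \<alpha>) D = (\<Sum>i<m. if \<alpha> = unitv i then cmult m a (blade {i}) D else 0)"
  unfolding xvec_def by (simp add: cmult_sum_right cmult_if_right)

lemma unitv_subexps: "i < m \<Longrightarrow> unitv i \<in> subexps m \<gamma> \<longleftrightarrow> 1 \<le> \<gamma> i"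
  unfolding subexps_def unitv_def by auto

lemma xvec_left:
  "pmult m (xvec m) R \<gamma> C
    = (\<Sum>i<m. if 1 \<le> \<gamma> i then cmult m (blade {i}) (R (dec_exp \<gamma> i)) C else 0)"
proof -
  have "pmult m (xvec m) R \<gamma> C = (\<Sum>\<alpha>\<in>subexps m \<gamma>. \<Sum>i<m.
      if \<alpha> = unitv i then cmult m (blade {i}) (R (\<lambda>l. \<gamma> l - \<alpha> l)) C else 0)"
    unfolding pmult_subexps cmult_xvec_left ..
  also have "\<dots> = (\<Sum>i<m. \<Sum>\<alpha>\<in>subexps m \<gamma>.
      if \<alpha> = unitv i then cmult m (blade {i}) (R (\<lambda>l. \<gamma> l - \<alpha> l)) C else 0)"
    by (rule sum.swap)
  also have "\<dots> = (\<Sum>i<m. if 1 \<le> \<gamma> i then cmult m (blade {i}) (R (dec_exp \<gamma> i)) C else 0)"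
    by (intro sum.cong refl) (simp add: sum.delta unitv_subexps dec_exp_def)
  finally show ?thesis .
qed

lemma diff_eq_unitv_iff:
  assumes "\<alpha> \<in> subexps m \<gamma>"
  shows "(\<lambda>l. \<gamma> l - \<alpha> l) = unitv j \<longleftrightarrow> 1 \<le> \<gamma> j \<and> \<alpha> = dec_exp \<gamma> j"
proof -
  have le: "\<alpha> l \<le> \<gamma> l" for l using assms unfolding subexps_def by auto
  have "(\<lambda>l. \<gamma> l - \<alpha> l) = unitv j \<longleftrightarrow> (\<forall>l. \<alpha> l = \<gamma> l - unitv j l \<and> unitv j l \<le> \<gamma> l)"
    using le by (auto simp: fun_eq_iff) (metis diff_diff_cancel diff_le_self)+
  also have "\<dots> \<longleftrightarrow> 1 \<le> \<gamma> j \<and> \<alpha> = dec_exp \<gamma> j"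
    by (auto simp: dec_exp_def fun_eq_iff unitv_def split: if_splits)
  finally show ?thesis .
qed

lemma xvec_right:
  assumes R: "supported m R"
  shows "pmult m R (xvec m) \<gamma> C
    = (\<Sum>j<m. if 1 \<le> \<gamma> j then cmult m (R (dec_exp \<gamma> j)) (blade {j}) C else 0)"
proof -
  have "pmult m R (xvec m) \<gamma> C = (\<Sum>j<m. \<Sum>\<alpha>\<in>subexps m \<gamma>.
      if (\<lambda>l. \<gamma> l - \<alpha> l) = unitv j then cmult m (R \<alpha>) (blade {j}) C else 0)"
    unfolding pmult_subexps cmult_xvec_right by (rule sum.swap)
  also have "\<dots> = (\<Sum>j<m. \<Sum>\<alpha>\<in>subexps m \<gamma>.
      if 1 \<le> \<gamma> j then (if \<alpha> = dec_exp \<gamma> j then cmult m (R \<alpha>) (blade {j}) C else 0) else 0)"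
    by (intro sum.cong refl) (simp add: diff_eq_unitv_iff)
  also have "\<dots> = (\<Sum>j<m. if 1 \<le> \<gamma> j then cmult m (R (dec_exp \<gamma> j)) (blade {j}) C else 0)"
  proof (intro sum.cong refl)
    fix j assume j: "j \<in> {..<m}"
    have "R (dec_exp \<gamma> j) = (\<lambda>C. 0)" if "dec_exp \<gamma> j \<notin> subexps m \<gamma>"
    proof -
      have "\<not> (\<forall>i. m \<le> i \<longrightarrow> dec_exp \<gamma> j i = 0)"
        using that j unfolding subexps_def dec_exp_def unitv_def by auto
      then show ?thesis using R unfolding supported_def by auto
    qed
    then show "(\<Sum>\<alpha>\<in>subexps m \<gamma>. if 1 \<le> \<gamma> j then (if \<alpha> = dec_exp \<gamma> j then cmult m (R \<alpha>) (blade {j}) C else 0) else 0)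
        = (if 1 \<le> \<gamma> j then cmult m (R (dec_exp \<gamma> j)) (blade {j}) C else 0)"
      by (auto simp: sum.delta)
  qed
  finally show ?thesis .
qed

lemma xsand_formula:
  assumes v: "supported m R"
  shows "xsand m R \<beta> = (\<lambda>C. \<Sum>j<m. \<Sum>i<m. if 1 \<le> \<beta> j \<and> 1 \<le> dec_exp \<beta> j i then
     cmult m (cmult m (blade {i}) (R (dec_exp (dec_exp \<beta> j) i))) (blade {j}) C else 0)"
proof
  fix C
  have v2: "supported m (pmult m (xvec m) R)" by (rule pmult_supported[OF v])
  have l: "\<And>\<gamma>. pmult m (xvec m) R \<gamma> = (\<lambda>C. \<Sum>i<m. if 1 \<le> \<gamma> i then cmult m (blade {i}) (R (dec_exp \<gamma> i)) C else 0)"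
    by (rule ext) (rule xvec_left)
  show "xsand m R \<beta> C = (\<Sum>j<m. \<Sum>i<m. if 1 \<le> \<beta> j \<and> 1 \<le> dec_exp \<beta> j i then
     cmult m (cmult m (blade {i}) (R (dec_exp (dec_exp \<beta> j) i))) (blade {j}) C else 0)"
    unfolding xsand_def xvec_right[OF v2] l
  proof (intro sum.cong refl)
    fix j assume "j \<in> {..<m}"
    show "(if 1 \<le> \<beta> j then cmult m (\<lambda>C. \<Sum>i<m. if 1 \<le> dec_exp \<beta> j i then cmult m (blade {i}) (R (dec_exp (dec_exp \<beta> j) i)) C else 0) (blade {j}) C else 0) =
      (\<Sum>i<m. if 1 \<le> \<beta> j \<and> 1 \<le> dec_exp \<beta> j i then cmult m (cmult m (blade {i}) (R (dec_exp (dec_exp \<beta> j) i))) (blade {j}) C else 0)"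
      by (cases "1 \<le> \<beta> j") (simp_all add: cmult_sum_left cmult_if_left)
  qed
qed

lemma pderiv_x_twice: "pderiv_x i (pderiv_x j p) \<alpha> = (\<lambda>C. (real (\<alpha> i + 1) * real (inc_exp \<alpha> i j + 1)) * p (inc_exp (inc_exp \<alpha> i) j) C)"
  unfolding pderiv_x_def inc_exp_def by (simp add: algebra_simps)

lemma dirac2_formula: "dirac2 m P \<alpha> = (\<lambda>C. \<Sum>i<m. \<Sum>j<m. (real (\<alpha> i + 1) * real (inc_exp \<alpha> i j + 1)) *
   cmult m (blade {i}) (cmult m (P (inc_exp (inc_exp \<alpha> i) j)) (blade {j})) C)"
  unfolding dirac2_def pderiv_x_twice cmult_scale_left cmult_scale_right ..

lemma dec_inc_exp[simp]: "dec_exp (inc_exp \<alpha> i) i = \<alpha>"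
  unfolding dec_exp_def inc_exp_def by simp

lemma inc_dec_exp: "1 \<le> \<beta> i \<Longrightarrow> inc_exp (dec_exp \<beta> i) i = \<beta>"
  unfolding dec_exp_def inc_exp_def unitv_def by (auto simp: fun_eq_iff)

lemma inc_exp_mons: assumes "i < m" shows "inc_exp \<alpha> i \<in> mons m (Suc n) \<longleftrightarrow> \<alpha> \<in> mons m n"
proof -
  have s: "(\<Sum>l<m. inc_exp \<alpha> i l) = (\<Sum>l<m. \<alpha> l) + 1"
    unfolding inc_exp_def unitv_def using assms by (simp add: sum.distrib)
  have "(\<forall>l. m \<le> l \<longrightarrow> inc_exp \<alpha> i l = 0) \<longleftrightarrow> (\<forall>l. m \<le> l \<longrightarrow> \<alpha> l = 0)"
    unfolding inc_exp_def unitv_def using assms by auto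
  then show ?thesis unfolding mons_def using s by auto
qed

lemma inc_exp_sum: "i < m \<Longrightarrow> (\<Sum>l<m. inc_exp \<alpha> i l) = (\<Sum>l<m. \<alpha> l) + 1"
  unfolding inc_exp_def unitv_def by (simp add: sum.distrib)

lemma sum_mons_inc2:
  assumes i: "i < m" and j: "j < m"
  shows "(\<Sum>\<beta>\<in>mons m (Suc (Suc n)). if 1 \<le> \<beta> j \<and> 1 \<le> dec_exp \<beta> j i then g \<beta> else 0)
       = (\<Sum>\<alpha>\<in>mons m n. g (inc_exp (inc_exp \<alpha> i) j))"
proof -
  have "(\<Sum>\<beta>\<in>mons m (Suc (Suc n)). if 1 \<le> \<beta> j \<and> 1 \<le> dec_exp \<beta> j i then g \<beta> else 0)
      = (\<Sum>\<beta>\<in>{\<beta>\<in>mons m (Suc (Suc n)). 1 \<le> \<beta> j \<and> 1 \<le> dec_exp \<beta> j i}. g \<beta>)"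
    by (simp add: sum.inter_filter)
  also have "\<dots> = (\<Sum>\<alpha>\<in>mons m n. g (inc_exp (inc_exp \<alpha> i) j))"
  proof (rule sum.reindex_bij_witness[where i="\<lambda>\<alpha>. inc_exp (inc_exp \<alpha> i) j" and j="\<lambda>\<beta>. dec_exp (dec_exp \<beta> j) i"])
    fix a assume "a \<in> mons m n"
    then show "dec_exp (dec_exp (inc_exp (inc_exp a i) j) j) i = a" by simp
  next
    fix a assume "a \<in> mons m n"
    then show "inc_exp (inc_exp a i) j \<in> {\<beta> \<in> mons m (Suc (Suc n)). 1 \<le> \<beta> j \<and> 1 \<le> dec_exp \<beta> j i}"
      using inc_exp_mons[OF i] inc_exp_mons[OF j] by simp (simp add: inc_exp_def unitv_def)
  next
    fix b assume b: "b \<in> {\<beta> \<in> mons m (Suc (Suc n)). 1 \<le> \<beta> j \<and> 1 \<le> dec_exp \<beta> j i}"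
    then have e: "inc_exp (inc_exp (dec_exp (dec_exp b j) i) i) j = b" by (simp add: inc_dec_exp)
    then show "inc_exp (inc_exp (dec_exp (dec_exp b j) i) i) j = b" .
    show "dec_exp (dec_exp b j) i \<in> mons m n"
      using b e inc_exp_mons[OF i, of "dec_exp (dec_exp b j) i"] inc_exp_mons[OF j, of "inc_exp (dec_exp (dec_exp b j) i) i"] by simp
  qed (auto simp: inc_dec_exp)
  finally show ?thesis .
qed

section \<open>The Fischer inner product and the adjointness of x-sandwich and Dirac operator\<close>

definition mfact :: "nat \<Rightarrow> (nat \<Rightarrow> nat) \<Rightarrow> real" where "mfact m \<alpha> = (\<Prod>i<m. fact (\<alpha> i))"

lemma mfact_pos: "mfact m \<alpha> > 0" unfolding mfact_def by (intro prod_pos) auto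

lemma mfact_inc_exp: assumes "i < m" shows "mfact m (inc_exp \<alpha> i) = real (\<alpha> i + 1) * mfact m \<alpha>"
proof -
  have "mfact m (inc_exp \<alpha> i) = (\<Prod>l<m. fact (\<alpha> l) * (if l = i then real (\<alpha> i + 1) else 1))"
    unfolding mfact_def inc_exp_def unitv_def by (intro prod.cong refl) (auto simp: fact_Suc)
  also have "\<dots> = mfact m \<alpha> * real (\<alpha> i + 1)"
    unfolding mfact_def prod.distrib using assms by (simp add: prod.delta)
  finally show ?thesis by simp
qed

definition fischer :: "nat \<Rightarrow> nat \<Rightarrow> cpoly \<Rightarrow> cpoly \<Rightarrow> real" where
  "fischer m k P Q = (\<Sum>\<alpha>\<in>mons m k. mfact m \<alpha> * cinner m (P \<alpha>) (Q \<alpha>))"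

lemma fischer_zero_right: "fischer m k R (\<lambda>\<alpha> C. 0) = 0"
  unfolding fischer_def cinner_def by simp

lemma fischer_self_zero:
  assumes P: "P \<in> hpoly m k" and z: "fischer m k P P = 0"
  shows "P = (\<lambda>\<alpha> C. 0)"
proof (intro ext)
  fix \<alpha> C
  have nn: "\<And>\<alpha>. 0 \<le> mfact m \<alpha> * cinner m (P \<alpha>) (P \<alpha>)"
    by (intro mult_nonneg_nonneg cinner_nonneg less_imp_le[OF mfact_pos])
  show "P \<alpha> C = 0"
  proof (cases "\<alpha> \<in> mons m k")
    case True
    then have "mfact m \<alpha> * cinner m (P \<alpha>) (P \<alpha>) = 0"
      using z nn unfolding fischer_def by (subst (asm) sum_nonneg_eq_0_iff) auto
    then have "cinner m (P \<alpha>) (P \<alpha>) = 0" using mfact_pos[of m \<alpha>] by simp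
    then have "\<forall>C\<in>blades m. P \<alpha> C * P \<alpha> C = 0"
      unfolding cinner_def by (subst (asm) sum_nonneg_eq_0_iff) auto
    then show ?thesis using P unfolding hpoly_def clif_def by (cases "C \<in> blades m") auto
  next
    case False then show ?thesis using P unfolding hpoly_def by auto
  qed
qed

text \<open>The key identity <x R x, P> = <R, d P d>: the weights alpha! turn the
  derivative factors into the shift of the exponent, and e_i, e_j are anti-self-adjoint.\<close>
lemma fischer_xsand_dirac2:
  assumes R: "R \<in> hpoly m n" and P: "P \<in> hpoly m (Suc (Suc n))"
  shows "fischer m (Suc (Suc n)) (xsand m R) P = fischer m n R (dirac2 m P)"
proof -
  define X where
    "X i j \<beta> = cmult m (cmult m (blade {i}) (R (dec_exp (dec_exp \<beta> j) i))) (blade {j})" for i j \<beta>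
  define Y where
    "Y \<alpha> i j = cinner m (R \<alpha>) (cmult m (blade {i}) (cmult m (P (inc_exp (inc_exp \<alpha> i) j)) (blade {j})))"
    for \<alpha> i j
  define K where "K \<alpha> i j = real (\<alpha> i + 1) * real (inc_exp \<alpha> i j + 1)" for \<alpha> i j
  have v: "supported m R" using R by (rule hpoly_supported)
  have "fischer m (Suc (Suc n)) (xsand m R) P = (\<Sum>\<beta>\<in>mons m (Suc (Suc n)). mfact m \<beta> *
      (\<Sum>j<m. \<Sum>i<m. if 1 \<le> \<beta> j \<and> 1 \<le> dec_exp \<beta> j i then cinner m (X i j \<beta>) (P \<beta>) else 0))"
    unfolding fischer_def xsand_formula[OF v] X_def by (simp add: cinner_sum_left cinner_if_left)
  also have "\<dots> = (\<Sum>\<beta>\<in>mons m (Suc (Suc n)). \<Sum>j<m. \<Sum>i<m.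
      if 1 \<le> \<beta> j \<and> 1 \<le> dec_exp \<beta> j i then mfact m \<beta> * cinner m (X i j \<beta>) (P \<beta>) else 0)"
    by (auto simp: sum_distrib_left intro!: sum.cong)
  also have "\<dots> = (\<Sum>j<m. \<Sum>i<m. \<Sum>\<beta>\<in>mons m (Suc (Suc n)).
      if 1 \<le> \<beta> j \<and> 1 \<le> dec_exp \<beta> j i then mfact m \<beta> * cinner m (X i j \<beta>) (P \<beta>) else 0)"
    by (rule sum_rotate3)
  also have "\<dots> = (\<Sum>j<m. \<Sum>i<m. \<Sum>\<alpha>\<in>mons m n.
      mfact m (inc_exp (inc_exp \<alpha> i) j) * cinner m (X i j (inc_exp (inc_exp \<alpha> i) j)) (P (inc_exp (inc_exp \<alpha> i) j)))"
    by (rule sum.cong[OF refl], rule sum.cong[OF refl], rule sum_mons_inc2, auto)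
  also have "\<dots> = (\<Sum>j<m. \<Sum>i<m. \<Sum>\<alpha>\<in>mons m n. mfact m \<alpha> * (K \<alpha> i j * Y \<alpha> i j))"
  proof (intro sum.cong refl)
    fix j i \<alpha> assume j: "j \<in> {..<m}" and i: "i \<in> {..<m}"
    show "mfact m (inc_exp (inc_exp \<alpha> i) j) * cinner m (X i j (inc_exp (inc_exp \<alpha> i) j)) (P (inc_exp (inc_exp \<alpha> i) j)) =
          mfact m \<alpha> * (K \<alpha> i j * Y \<alpha> i j)"
      using i j unfolding X_def Y_def K_def
      by (simp add: mfact_inc_exp cinner_sandwich)
  qed
  also have "\<dots> = (\<Sum>\<alpha>\<in>mons m n. \<Sum>i<m. \<Sum>j<m. mfact m \<alpha> * (K \<alpha> i j * Y \<alpha> i j))"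
  proof -
    have "(\<Sum>\<alpha>\<in>mons m n. \<Sum>i<m. \<Sum>j<m. mfact m \<alpha> * (K \<alpha> i j * Y \<alpha> i j)) =
          (\<Sum>i<m. \<Sum>j<m. \<Sum>\<alpha>\<in>mons m n. mfact m \<alpha> * (K \<alpha> i j * Y \<alpha> i j))" by (rule sum_rotate3)
    also have "\<dots> = (\<Sum>j<m. \<Sum>i<m. \<Sum>\<alpha>\<in>mons m n. mfact m \<alpha> * (K \<alpha> i j * Y \<alpha> i j))" by (rule sum.swap)
    finally show ?thesis by simp
  qed
  also have "\<dots> = fischer m n R (dirac2 m P)"
    unfolding fischer_def dirac2_formula Y_def K_def
    by (simp add: cinner_sum_right cinner_scale_right sum_distrib_left)
  finally show ?thesis .
qed

lemma xsand_hpoly: "R \<in> hpoly m n \<Longrightarrow> xsand m R \<in> hpoly m (Suc (Suc n))"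
  unfolding xsand_def using pmult_hpoly[OF pmult_hpoly[OF xvec_hpoly] xvec_hpoly] by simp

lemma dirac2_clif: "dirac2 m P \<alpha> \<in> clif m"
  unfolding dirac2_def clif_def using cmult_clif[unfolded clif_def] by (auto intro!: sum.neutral)

lemma dirac2_hpoly:
  assumes P: "P \<in> hpoly m (Suc (Suc n))"
  shows "dirac2 m P \<in> hpoly m n"
  unfolding hpoly_def
proof (intro CollectI conjI allI impI)
  fix \<alpha> assume a: "\<alpha> \<notin> mons m n"
  have "\<And>i j. i < m \<Longrightarrow> j < m \<Longrightarrow> P (inc_exp (inc_exp \<alpha> i) j) = (\<lambda>C. 0)"
  proof -
    fix i j assume "i < m" "j < m"
    then have "inc_exp (inc_exp \<alpha> i) j \<notin> mons m (Suc (Suc n))" using a inc_exp_mons by simp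
    then show "P (inc_exp (inc_exp \<alpha> i) j) = (\<lambda>C. 0)" using P unfolding hpoly_def by auto
  qed
  then show "dirac2 m P \<alpha> = (\<lambda>C. 0)" unfolding dirac2_formula by (auto intro!: sum.neutral)
qed (rule dirac2_clif)

lemma dirac2_low:
  assumes P: "P \<in> hpoly m k" and k: "k < 2"
  shows "dirac2 m P = (\<lambda>\<alpha> C. 0)"
proof (intro ext)
  fix \<alpha> C
  have "\<And>i j. i < m \<Longrightarrow> j < m \<Longrightarrow> P (inc_exp (inc_exp \<alpha> i) j) = (\<lambda>C. 0)"
  proof -
    fix i j assume i: "i < m" and j: "j < m"
    have "inc_exp (inc_exp \<alpha> i) j \<notin> mons m k"
      using inc_exp_sum[OF i, of \<alpha>] inc_exp_sum[OF j, of "inc_exp \<alpha> i"] k unfolding mons_def by auto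
    then show "P (inc_exp (inc_exp \<alpha> i) j) = (\<lambda>C. 0)" using P unfolding hpoly_def by auto
  qed
  then show "dirac2 m P \<alpha> C = 0" unfolding dirac2_formula by (auto intro!: sum.neutral)
qed

lemma xsand_extremal_coeff:
  assumes m: "0 < m" and R: "supported m R"
    and top: "\<And>\<gamma>. \<alpha> 0 < \<gamma> 0 \<Longrightarrow> R \<gamma> = (\<lambda>C. 0)"
  shows "xsand m R (inc_exp (inc_exp \<alpha> 0) 0) = cmult m (cmult m (blade {0}) (R \<alpha>)) (blade {0})"
proof
  fix C
  define \<beta> where "\<beta> = inc_exp (inc_exp \<alpha> 0) 0"
  define c where "c = cmult m (cmult m (blade {0}) (R \<alpha>)) (blade {0}) C"
  have terms: "(if 1 \<le> \<beta> j \<and> 1 \<le> dec_exp \<beta> j i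
        then cmult m (cmult m (blade {i}) (R (dec_exp (dec_exp \<beta> j) i))) (blade {j}) C else 0)
      = (if j = 0 then (if i = 0 then c else 0) else 0)" for i j
  proof (cases "i = 0 \<and> j = 0")
    case True
    then show ?thesis by (simp add: \<beta>_def c_def) (simp add: inc_exp_def unitv_def)
  next
    case False
    have "dec_exp (dec_exp \<beta> j) i 0 = \<beta> 0 - unitv j 0 - unitv i 0" unfolding dec_exp_def by simp
    then have "\<alpha> 0 < dec_exp (dec_exp \<beta> j) i 0"
      using False unfolding \<beta>_def inc_exp_def unitv_def by auto
    then show ?thesis using False top by auto
  qed
  have "xsand m R \<beta> C = (\<Sum>j<m. \<Sum>i<m. if j = 0 then (if i = 0 then c else 0) else 0)"
    unfolding xsand_formula[OF R] terms ..
  also have "\<dots> = (\<Sum>j<m. if j = 0 then c else 0)"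
    using m by (intro sum.cong refl) (simp add: sum.delta)
  also have "\<dots> = c" using m by simp
  finally show "xsand m R (inc_exp (inc_exp \<alpha> 0) 0) C = cmult m (cmult m (blade {0}) (R \<alpha>)) (blade {0}) C"
    unfolding \<beta>_def c_def .
qed

text \<open>For m > 0 the x-sandwich is injective: look at a nonzero coefficient R_alpha with
  maximal power of x_0.\<close>
lemma xsand_inj:
  assumes m: "0 < m" and R: "R \<in> hpoly m n" and z: "xsand m R = (\<lambda>\<alpha> C. 0)"
  shows "R = (\<lambda>\<alpha> C. 0)"
proof (rule ccontr)
  assume nz: "R \<noteq> (\<lambda>\<alpha> C. 0)"
  define S where "S = {\<alpha> \<in> mons m n. R \<alpha> \<noteq> (\<lambda>C. 0)}"
  have "S \<noteq> {}"
    using nz R unfolding S_def hpoly_def by (auto simp: fun_eq_iff)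
  moreover have fin: "finite ((\<lambda>\<alpha>. \<alpha> 0) ` S)" unfolding S_def by simp
  ultimately have "Max ((\<lambda>\<alpha>. \<alpha> 0) ` S) \<in> (\<lambda>\<alpha>. \<alpha> 0) ` S" by (intro Max_in) auto
  then obtain \<alpha> where aS: "\<alpha> \<in> S" and "\<alpha> 0 = Max ((\<lambda>\<alpha>. \<alpha> 0) ` S)" by auto
  then have amax: "\<gamma> 0 \<le> \<alpha> 0" if "\<gamma> \<in> S" for \<gamma> using fin that by simp
  have "R \<gamma> = (\<lambda>C. 0)" if "\<alpha> 0 < \<gamma> 0" for \<gamma>
    using amax[of \<gamma>] that R unfolding S_def hpoly_def by force
  then have "cmult m (cmult m (blade {0}) (R \<alpha>)) (blade {0}) = (\<lambda>C. 0)"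
    using xsand_extremal_coeff[OF m hpoly_supported[OF R]] z by metis
  then have "R \<alpha> = (\<lambda>C. 0)"
    using blade_sandwich_zero[OF m] R unfolding hpoly_def by (auto simp: cmult_assoc)
  then show False using aS unfolding S_def by auto
qed

section \<open>Finite-dimensional linear algebra on P(n)\<close>

context vector_space
begin

lemma inj_endo_surj:
  assumes fin: "finite B" and sub: "subspace W" and WB: "W \<subseteq> span B"
    and lin: "Vector_Spaces.linear scale scale f" and fW: "f ` W \<subseteq> W" and inj: "inj_on f W"
  shows "W \<subseteq> f ` W"
proof -
  interpret lf: Vector_Spaces.linear scale scale f by fact
  obtain C where C: "C \<subseteq> W" "independent C" "W \<subseteq> span C" "card C = dim W"
    using basis_exists[of W] by blast
  have fC: "finite C" using independent_span_bound[OF fin C(2)] C(1) WB by auto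
  have spC: "span C \<subseteq> W" using span_minimal[OF C(1) sub] .
  have injC: "inj_on f (span C)" using inj spC by (rule inj_on_subset)
  have indf: "independent (f ` C)" using lf.independent_injective_image[OF C(2) injC] .
  have cardf: "card (f ` C) = card C"
    using card_image[OF inj_on_subset[OF injC span_superset]] .
  have "W \<subseteq> span (f ` C)"
  proof
    fix w assume w: "w \<in> W"
    show "w \<in> span (f ` C)"
    proof (rule ccontr)
      assume nw: "w \<notin> span (f ` C)"
      then have wn: "w \<notin> f ` C" using span_superset by blast
      have ind2: "independent (insert w (f ` C))"
        using independent_insert indf nw wn by auto
      have "insert w (f ` C) \<subseteq> span C" using w C(3) fW C(1) spC by auto
      then have "card (insert w (f ` C)) \<le> card C"
        using independent_span_bound[OF fC ind2] by auto
      moreover have "card (insert w (f ` C)) = card C + 1"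
        using wn fC cardf by simp
      ultimately show False by simp
    qed
  qed
  also have "span (f ` C) = f ` span C" by (rule lf.span_image)
  also have "\<dots> \<subseteq> f ` W" using spC by auto
  finally show ?thesis .
qed

end

definition pscale :: "real \<Rightarrow> cpoly \<Rightarrow> cpoly" where
  "pscale r p = (\<lambda>\<alpha> C. r * p \<alpha> C)"

lemma pscale_vector_space: "vector_space pscale"
  by unfold_locales (auto simp: pscale_def fun_eq_iff algebra_simps)

lemma plus_cpoly: "p + q = (\<lambda>\<alpha> C. p \<alpha> C + q \<alpha> C)"
  by (auto simp: fun_eq_iff)

lemma zero_cpoly: "(0::cpoly) = (\<lambda>\<alpha> C. 0)"
  by (simp add: fun_eq_iff)

lemma hpoly_zero: "(\<lambda>\<alpha> C. 0) \<in> hpoly m k"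
  unfolding hpoly_def clif_def by auto

lemma hpoly_add: "p \<in> hpoly m k \<Longrightarrow> q \<in> hpoly m k \<Longrightarrow> p + q \<in> hpoly m k"
  unfolding hpoly_def clif_def by (auto simp: fun_eq_iff)

lemma hpoly_scale: "p \<in> hpoly m k \<Longrightarrow> pscale r p \<in> hpoly m k"
  unfolding hpoly_def clif_def pscale_def by (auto simp: fun_eq_iff)

lemma hpoly_sum:
  "finite S \<Longrightarrow> (\<And>s. s \<in> S \<Longrightarrow> Q s \<in> hpoly m k) \<Longrightarrow> (\<lambda>\<alpha> C. \<Sum>s\<in>S. Q s \<alpha> C) \<in> hpoly m k"
  unfolding hpoly_def clif_def by (auto intro!: sum.neutral simp: fun_eq_iff)

lemma xsand_add: "xsand m (p + q) = xsand m p + xsand m q"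
  unfolding xsand_def plus_cpoly pmult_add_right pmult_add_left ..

lemma xsand_scale: "xsand m (pscale r p) = pscale r (xsand m p)"
  unfolding xsand_def pscale_def pmult_scale_right pmult_scale_left ..

lemma xsand_sum:
  "finite S \<Longrightarrow> xsand m (\<lambda>\<alpha> C. \<Sum>s\<in>S. Q s \<alpha> C) = (\<lambda>\<alpha> C. \<Sum>s\<in>S. xsand m (Q s) \<alpha> C)"
  unfolding xsand_def by (simp add: pmult_sum_left pmult_sum_right)

lemma dirac2_add: "dirac2 m (p + q) = dirac2 m p + dirac2 m q"
  unfolding dirac2_formula[abs_def] plus_cpoly
  by (auto simp: fun_eq_iff cmult_add_left cmult_add_right sum.distrib algebra_simps)

lemma dirac2_scale: "dirac2 m (pscale r p) = pscale r (dirac2 m p)"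
  unfolding dirac2_formula[abs_def] pscale_def
  by (auto simp: fun_eq_iff cmult_scale_left cmult_scale_right sum_distrib_left algebra_simps)

lemma sum_cpoly_apply: "finite S \<Longrightarrow> (\<Sum>s\<in>S. f s) \<alpha> C = (\<Sum>s\<in>S. f s \<alpha> C)"
  for f :: "'a \<Rightarrow> cpoly"
  by (induction S rule: finite_induct) auto

definition monomial :: "(nat \<Rightarrow> nat) \<Rightarrow> nat set \<Rightarrow> cpoly" where
  "monomial \<alpha> A = (\<lambda>\<beta> C. if \<beta> = \<alpha> \<and> C = A then 1 else 0)"

lemma hpoly_expand:
  assumes p: "p \<in> hpoly m k"
  shows "p = (\<Sum>\<alpha>\<in>mons m k. \<Sum>A\<in>blades m. pscale (p \<alpha> A) (monomial \<alpha> A))"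
proof (intro ext)
  fix \<beta> C
  have "(\<Sum>\<alpha>\<in>mons m k. \<Sum>A\<in>blades m. pscale (p \<alpha> A) (monomial \<alpha> A)) \<beta> C =
      (\<Sum>\<alpha>\<in>mons m k. \<Sum>A\<in>blades m. p \<alpha> A * (if \<beta> = \<alpha> \<and> C = A then 1 else 0))"
    by (simp add: sum_cpoly_apply pscale_def monomial_def)
  also have "\<dots> = (\<Sum>x\<in>mons m k \<times> blades m. p (fst x) (snd x) * (if \<beta> = fst x \<and> C = snd x then 1 else 0))"
    by (simp add: sum.cartesian_product case_prod_beta)
  also have "\<dots> = (\<Sum>x\<in>mons m k \<times> blades m. if x = (\<beta>, C) then p (fst x) (snd x) else 0)"
    by (intro sum.cong refl) auto
  also have "\<dots> = (if (\<beta>, C) \<in> mons m k \<times> blades m then p \<beta> C else 0)"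
    by (subst sum.delta) auto
  also have "\<dots> = p \<beta> C" using p unfolding hpoly_def clif_def by (auto simp: mem_Times_iff)
  finally show "p \<beta> C = (\<Sum>\<alpha>\<in>mons m k. \<Sum>A\<in>blades m. pscale (p \<alpha> A) (monomial \<alpha> A)) \<beta> C" by simp
qed

text \<open>D(x R x) = 0 forces R = 0: by adjointness <x R x, x R x> = <R, D(x R x)> = 0.\<close>
lemma dirac2_xsand_zero:
  assumes m: "0 < m" and R: "R \<in> hpoly m n" and z: "dirac2 m (xsand m R) = (\<lambda>\<alpha> C. 0)"
  shows "R = (\<lambda>\<alpha> C. 0)"
proof -
  have T: "xsand m R \<in> hpoly m (Suc (Suc n))" using xsand_hpoly[OF R] .
  have "fischer m (Suc (Suc n)) (xsand m R) (xsand m R) = fischer m n R (dirac2 m (xsand m R))"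
    by (rule fischer_xsand_dirac2[OF R T])
  also have "\<dots> = 0" using z by (simp add: fischer_zero_right)
  finally have "xsand m R = (\<lambda>\<alpha> C. 0)" using fischer_self_zero[OF T] by simp
  then show ?thesis using xsand_inj[OF m R] by simp
qed

lemma dirac2_xsand_surj:
  assumes m: "0 < m"
  shows "hpoly m n \<subseteq> (\<lambda>R. dirac2 m (xsand m R)) ` hpoly m n"
proof -
  interpret V: vector_space pscale by (rule pscale_vector_space)
  define f where "f R = dirac2 m (xsand m R)" for R
  define B where "B = (\<lambda>(\<alpha>,A). monomial \<alpha> A) ` (mons m n \<times> blades m)"
  have fB: "finite B" unfolding B_def by simp
  have sub: "V.subspace (hpoly m n)"
    unfolding V.subspace_def using hpoly_zero[of m n] hpoly_add hpoly_scale by (auto simp: zero_cpoly)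
  have WB: "hpoly m n \<subseteq> V.span B"
  proof
    fix p assume p: "p \<in> hpoly m n"
    have "(\<Sum>\<alpha>\<in>mons m n. \<Sum>A\<in>blades m. pscale (p \<alpha> A) (monomial \<alpha> A)) \<in> V.span B"
      by (intro V.span_sum V.span_scale V.span_base) (auto simp: B_def)
    then show "p \<in> V.span B" using hpoly_expand[OF p] by simp
  qed
  have lin: "Vector_Spaces.linear pscale pscale f"
    unfolding Vector_Spaces.linear_iff f_def using pscale_vector_space
    by (simp add: xsand_add xsand_scale dirac2_add dirac2_scale)
  interpret lf: Vector_Spaces.linear pscale pscale f by (rule lin)
  have fW: "f ` hpoly m n \<subseteq> hpoly m n"
    unfolding f_def using xsand_hpoly dirac2_hpoly by auto
  have inj: "inj_on f (hpoly m n)"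
  proof (rule inj_onI)
    fix x y assume x: "x \<in> hpoly m n" and y: "y \<in> hpoly m n" and e: "f x = f y"
    have "f (x - y) = (\<lambda>\<alpha> C. 0)" using e by (simp add: lf.diff fun_eq_iff)
    then have "x - y = (\<lambda>\<alpha> C. 0)"
      using dirac2_xsand_zero[OF m V.subspace_diff[OF sub x y]] unfolding f_def by simp
    then show "x = y" by (simp add: fun_eq_iff)
  qed
  show ?thesis using V.inj_endo_surj[OF fB sub WB lin fW inj] unfolding f_def .
qed

section \<open>The Fischer decomposition\<close>

lemma dirac2_zero[simp]: "dirac2 m (\<lambda>\<alpha> C. 0) = (\<lambda>\<alpha> C. 0)"
  unfolding dirac2_formula[abs_def] by simp

lemma xsand_zero[simp]: "xsand m (\<lambda>\<alpha> C. 0) = (\<lambda>\<alpha> C. 0)"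
  unfolding xsand_def by simp

text \<open>Existence: pick R with D(x R x) = D P by surjectivity; then P - x R x is inframonogenic.\<close>
lemma fischer_split_exists:
  assumes m: "0 < m" and P: "P \<in> hpoly m (Suc (Suc n))"
  obtains R where "R \<in> hpoly m n" and "P - xsand m R \<in> infra m (Suc (Suc n))"
proof -
  obtain R where R: "R \<in> hpoly m n" and e: "dirac2 m (xsand m R) = dirac2 m P"
    using dirac2_xsand_surj[OF m, of n] dirac2_hpoly[OF P] by force
  have d: "P - xsand m R = P + pscale (-1) (xsand m R)"
    by (simp add: fun_eq_iff pscale_def)
  have "P - xsand m R \<in> hpoly m (Suc (Suc n))"
    unfolding d by (intro hpoly_add hpoly_scale P xsand_hpoly R)
  moreover have "dirac2 m (P - xsand m R) = (\<lambda>\<alpha> C. 0)"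
    unfolding d dirac2_add dirac2_scale e by (simp add: fun_eq_iff pscale_def)
  ultimately show ?thesis using that R unfolding infra_def by auto
qed

text \<open>Uniqueness: if I + x R x = 0 with D I = 0, then D(x R x) = 0, so R = 0 and I = 0.\<close>
lemma fischer_split_unique:
  assumes m: "0 < m" and I: "I \<in> infra m (Suc (Suc n))" and R: "R \<in> hpoly m n"
    and z: "I + xsand m R = (\<lambda>\<alpha> C. 0)"
  shows "I = (\<lambda>\<alpha> C. 0) \<and> R = (\<lambda>\<alpha> C. 0)"
proof -
  have T: "xsand m R = pscale (-1) I"
    using z by (auto simp: fun_eq_iff pscale_def) (metis add_eq_0_iff)
  have "dirac2 m (xsand m R) = pscale (-1) (dirac2 m I)"
    unfolding T by (rule dirac2_scale)
  also have "\<dots> = (\<lambda>\<alpha> C. 0)" using I unfolding infra_def by (simp add: pscale_def)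
  finally have "R = (\<lambda>\<alpha> C. 0)" by (rule dirac2_xsand_zero[OF m R])
  moreover then have "I = (\<lambda>\<alpha> C. 0)" using z by (simp add: plus_cpoly)
  ultimately show ?thesis by simp
qed

lemma infra_low: "k < 2 \<Longrightarrow> infra m k = hpoly m k"
  unfolding infra_def using dirac2_low by auto

lemma xIx_0: "xIx m k 0 = infra m k"
proof -
  have "pmult m (pmult m (xpow m 0) P) (xpow m 0) = P" if "P \<in> infra m k" for P
    using that hpoly_supported pmult_pone_left pmult_pone_right pmult_supported
    unfolding infra_def xpow_0 by auto
  then show ?thesis unfolding xIx_def by force
qed

lemma xIx_Suc: "xIx m k (Suc s) = xsand m ` xIx m (k - 2) s"
proof -
  have e: "k - 2 * Suc s = k - 2 - 2 * s" by simp
  show ?thesis unfolding xIx_def e sandwich_Suc by blast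
qed

lemma xIx_hpoly: assumes "s \<le> k div 2" shows "xIx m k s \<subseteq> hpoly m k"
proof
  fix q assume "q \<in> xIx m k s"
  then obtain P where q: "q = pmult m (pmult m (xpow m s) P) (xpow m s)"
    and P: "P \<in> infra m (k - 2 * s)"
    unfolding xIx_def by auto
  have "q \<in> hpoly m (s + (k - 2 * s) + s)"
    unfolding q using P unfolding infra_def by (intro pmult_hpoly xpow_hpoly) auto
  moreover have "s + (k - 2 * s) + s = k" using assms by simp
  ultimately show "q \<in> hpoly m k" by simp
qed

lemma zero_xIx: "(\<lambda>\<alpha> C. 0) \<in> xIx m k s"
proof -
  have "(\<lambda>\<alpha> C. 0) \<in> infra m (k - 2 * s)" unfolding infra_def using hpoly_zero by simp
  then show ?thesis unfolding xIx_def by force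
qed

definition decomposes :: "nat \<Rightarrow> nat \<Rightarrow> cpoly \<Rightarrow> (nat \<Rightarrow> cpoly) \<Rightarrow> bool" where
  "decomposes m k P Q \<longleftrightarrow> (\<forall>s \<le> k div 2. Q s \<in> xIx m k s) \<and> P = (\<lambda>\<alpha> C. \<Sum>s \<le> k div 2. Q s \<alpha> C)"

lemma decomposes_low: "k < 2 \<Longrightarrow> decomposes m k P Q \<longleftrightarrow> P \<in> hpoly m k \<and> P = Q 0"
  unfolding decomposes_def by (auto simp: xIx_0 infra_low)

lemma decomposes_shift:
  assumes I: "I \<in> infra m (Suc (Suc n))" and D: "decomposes m n R Q"
  shows "decomposes m (Suc (Suc n)) (I + xsand m R) (case_nat I (\<lambda>s. xsand m (Q s)))"
  unfolding decomposes_def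
proof
  show "\<forall>s \<le> Suc (Suc n) div 2. case_nat I (\<lambda>s. xsand m (Q s)) s \<in> xIx m (Suc (Suc n)) s"
    using I D unfolding decomposes_def by (auto simp: xIx_0 xIx_Suc split: nat.split)
  show "I + xsand m R = (\<lambda>\<alpha> C. \<Sum>s \<le> Suc (Suc n) div 2. case_nat I (\<lambda>s. xsand m (Q s)) s \<alpha> C)"
    using D unfolding decomposes_def div2_Suc_Suc sum.atMost_Suc_shift
    by (simp add: xsand_sum plus_cpoly)
qed

lemma decomposes_unshift:
  assumes D: "decomposes m (Suc (Suc n)) P Q"
  obtains Q' where "Q 0 \<in> infra m (Suc (Suc n))"
    and "decomposes m n (\<lambda>\<alpha> C. \<Sum>s \<le> n div 2. Q' s \<alpha> C) Q'"
    and "\<And>s. s \<le> n div 2 \<Longrightarrow> Q (Suc s) = xsand m (Q' s)"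
    and "P = Q 0 + xsand m (\<lambda>\<alpha> C. \<Sum>s \<le> n div 2. Q' s \<alpha> C)"
proof -
  have "Q (Suc s) \<in> xsand m ` xIx m n s" if "s \<le> n div 2" for s
  proof -
    have "Q (Suc s) \<in> xIx m (Suc (Suc n)) (Suc s)" using D that unfolding decomposes_def by simp
    then show ?thesis by (simp add: xIx_Suc)
  qed
  then have "\<forall>s \<in> {..n div 2}. \<exists>q. q \<in> xIx m n s \<and> Q (Suc s) = xsand m q" by auto
  then obtain Q' where "\<forall>s \<in> {..n div 2}. Q' s \<in> xIx m n s \<and> Q (Suc s) = xsand m (Q' s)"
    by (auto dest!: bchoice)
  then have Q': "\<And>s. s \<le> n div 2 \<Longrightarrow> Q' s \<in> xIx m n s \<and> Q (Suc s) = xsand m (Q' s)" by simp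
  have "Q 0 \<in> infra m (Suc (Suc n))" using D unfolding decomposes_def by (auto simp: xIx_0)
  moreover have "P = Q 0 + xsand m (\<lambda>\<alpha> C. \<Sum>s \<le> n div 2. Q' s \<alpha> C)"
    using D Q' unfolding decomposes_def div2_Suc_Suc sum.atMost_Suc_shift
    by (simp add: xsand_sum plus_cpoly)
  ultimately show ?thesis using that Q' unfolding decomposes_def by blast
qed

lemma decomposition_exists:
  assumes m: "0 < m" and P: "P \<in> hpoly m k"
  shows "\<exists>Q. decomposes m k P Q"
  using P
proof (induction k arbitrary: P rule: less_induct)
  case (less k)
  show ?case
  proof (cases "k < 2")
    case True then show ?thesis using less.prems by (auto simp: decomposes_low)
  next
    case False
    define n where "n = k - 2"
    have k: "k = Suc (Suc n)" using False unfolding n_def by simp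
    obtain R where R: "R \<in> hpoly m n" and I: "P - xsand m R \<in> infra m k"
      using fischer_split_exists[OF m] less.prems k by blast
    obtain Q where "decomposes m n R Q" using less.IH[of n R] R k by auto
    then have "decomposes m k (P - xsand m R + xsand m R) (case_nat (P - xsand m R) (\<lambda>s. xsand m (Q s)))"
      using decomposes_shift I k by blast
    then show ?thesis by auto
  qed
qed

lemma decomposition_unique:
  assumes m: "0 < m" and D: "decomposes m k (\<lambda>\<alpha> C. 0) Q" and s: "s \<le> k div 2"
  shows "Q s = (\<lambda>\<alpha> C. 0)"
  using D s
proof (induction k arbitrary: Q s rule: less_induct)
  case (less k)
  show ?case
  proof (cases "k < 2")
    case True then show ?thesis using less.prems by (simp add: decomposes_low)
  next
    case False
    define n where "n = k - 2"
    have k: "k = Suc (Suc n)" using False unfolding n_def by simp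
    obtain Q' where I: "Q 0 \<in> infra m (Suc (Suc n))"
      and D': "decomposes m n (\<lambda>\<alpha> C. \<Sum>s \<le> n div 2. Q' s \<alpha> C) Q'"
      and Q': "\<And>s. s \<le> n div 2 \<Longrightarrow> Q (Suc s) = xsand m (Q' s)"
      and z: "(\<lambda>\<alpha> C. 0) = Q 0 + xsand m (\<lambda>\<alpha> C. \<Sum>s \<le> n div 2. Q' s \<alpha> C)"
      using decomposes_unshift[OF less.prems(1)[unfolded k]] by blast
    have "Q' s \<in> hpoly m n" if "s \<le> n div 2" for s
      using D' xIx_hpoly[OF that] unfolding decomposes_def by (meson atMost_iff subsetD that)
    then have "(\<lambda>\<alpha> C. \<Sum>s \<le> n div 2. Q' s \<alpha> C) \<in> hpoly m n" by (intro hpoly_sum) auto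
    from fischer_split_unique[OF m I this z[symmetric]]
    have Q0: "Q 0 = (\<lambda>\<alpha> C. 0)" and R0: "(\<lambda>\<alpha> C. \<Sum>s \<le> n div 2. Q' s \<alpha> C) = (\<lambda>\<alpha> C. 0)"
      by auto
    have D0: "decomposes m n (\<lambda>\<alpha> C. 0) Q'" using D' unfolding R0 .
    have Q'0: "Q' s = (\<lambda>\<alpha> C. 0)" if "s \<le> n div 2" for s
      using less.IH[OF _ D0 that] k by simp
    show ?thesis
    proof (cases s)
      case 0 then show ?thesis using Q0 by simp
    next
      case (Suc s')
      then have "s' \<le> n div 2" using less.prems(2) k by simp
      then show ?thesis using Suc Q' Q'0 by simp
    qed
  qed
qed

lemma hpoly_dim0: "0 < k \<Longrightarrow> p \<in> hpoly 0 k \<Longrightarrow> p = (\<lambda>\<alpha> C. 0)"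
  unfolding hpoly_def mons_def by (auto simp: fun_eq_iff)

theorem mainTheorem14:
  fixes m k :: nat
  assumes "2 \<le> k"
  shows "(\<forall>s \<le> k div 2. xIx m k s \<subseteq> hpoly m k)
    \<and> (\<forall>P \<in> hpoly m k. \<exists>Q. (\<forall>s \<le> k div 2. Q s \<in> xIx m k s)
          \<and> P = (\<lambda>\<alpha> C. \<Sum>s \<le> k div 2. Q s \<alpha> C))
    \<and> (\<forall>Q. (\<forall>s \<le> k div 2. Q s \<in> xIx m k s)
          \<and> (\<lambda>\<alpha> C. \<Sum>s \<le> k div 2. Q s \<alpha> C) = (\<lambda>\<alpha> C. 0)
          \<longrightarrow> (\<forall>s \<le> k div 2. Q s = (\<lambda>\<alpha> C. 0)))"
proof -
  have summands: "\<forall>s \<le> k div 2. xIx m k s \<subseteq> hpoly m k" using xIx_hpoly by blast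
  have exists: "\<exists>Q. decomposes m k P Q" if "P \<in> hpoly m k" for P
  proof (cases "m = 0")
    case True
    then have "P = (\<lambda>\<alpha> C. 0)" using hpoly_dim0[of k P] that True assms by simp
    then have "decomposes m k P (\<lambda>s. \<lambda>\<alpha> C. 0)"
      unfolding decomposes_def by (simp add: zero_xIx)
    then show ?thesis by blast
  qed (use decomposition_exists that in auto)
  have unique: "Q s = (\<lambda>\<alpha> C. 0)" if "decomposes m k (\<lambda>\<alpha> C. 0) Q" "s \<le> k div 2" for Q s
  proof (cases "m = 0")
    case True
    have "Q s \<in> hpoly m k" using that xIx_hpoly unfolding decomposes_def by blast
    then show ?thesis using hpoly_dim0[of k "Q s"] True assms by simp
  qed (use decomposition_unique that in auto)
  show ?thesis
  proof (intro conjI summands ballI allI impI)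
    fix P assume "P \<in> hpoly m k"
    then show "\<exists>Q. (\<forall>s \<le> k div 2. Q s \<in> xIx m k s) \<and> P = (\<lambda>\<alpha> C. \<Sum>s \<le> k div 2. Q s \<alpha> C)"
      using exists unfolding decomposes_def by blast
  next
    fix Q s
    assume "(\<forall>s \<le> k div 2. Q s \<in> xIx m k s) \<and> (\<lambda>\<alpha> C. \<Sum>s \<le> k div 2. Q s \<alpha> C) = (\<lambda>\<alpha> C. 0)"
      and "s \<le> k div 2"
    then show "Q s = (\<lambda>\<alpha> C. 0)" using unique[of Q s] unfolding decomposes_def by simp
  qed
qed

end
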